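(* Let $X$ and $Y$ be random variables with $X\ge0$ and $Y\ge1$. Then for every $p>1$, $$\mathbb{E}\,X\log Y\le(\mathbb{E}X^p)^{1/p}\left(\log\mathbb{E}Y+\frac{1}{p-1}\right).$$
   Context: $\log$ denotes the natural logarithm. *)

theory Defs
  imports "HOL-Probability.Probability"
begin

end

theory Submission
  imports Defs
begin

text \<open>
  Put \<open>c = 1/(p-1)\<close>, so that \<open>q = 1 + c\<close> is the exponent conjugate to \<open>p\<close>, and
  \<open>B = ln (E Y) + c\<close>. For a scale \<open>a > 0\<close>, Young's inequality applied to \<open>X/a\<close> and \<open>ln Y/B\<close>
  bounds \<open>X ln Y\<close> by \<open>a B ((X/a)\<^sup>p/p + (ln Y/B)\<^sup>q/q)\<close>. The function \<open>(ln t + c)\<^sup>q\<close> is concave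
  on \<open>[1,\<infinity>)\<close>, so \<open>(ln Y)\<^sup>q \<le> (ln Y + c)\<^sup>q\<close> lies below its tangent at \<open>E Y\<close>, which is
  affine in \<open>Y\<close> and has expectation \<open>B\<^sup>q\<close>. Taking expectations and choosing \<open>a = (E X\<^sup>p)\<^bsup>1/p\<^esup>\<close> gives
  \<open>E X ln Y \<le> a B\<close>; if \<open>E X\<^sup>p = 0\<close>, let \<open>a \<rightarrow> 0\<close> instead.
\<close>

lemma ln_add_powr_below_tangent:
  fixes c m y :: real
  assumes "c > 0" and "1 \<le> m" and "1 \<le> y"
  shows "(ln y + c) powr (1 + c) \<le> (ln m + c) powr (1 + c) + (1 + c) * (ln m + c) powr c / m * (y - m)"
proof -
  have pos: "ln t + c > 0" if "t \<in> {1..}" for t :: real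
    using that \<open>c > 0\<close> by (intro add_nonneg_pos) auto
  have "(- (1 + c) * (ln m + c) powr c / m) * (y - m)
      \<le> - ((ln y + c) powr (1 + c)) - - ((ln m + c) powr (1 + c))"
  proof (rule f''_imp_f'[where C = "{1..}"])
    show "((\<lambda>t. - ((ln t + c) powr (1 + c))) has_real_derivative - (1 + c) * (ln t + c) powr c / t) (at t)"
      if "t \<in> {1..}" for t
      using that pos[OF that] by (auto intro!: derivative_eq_intros simp: field_simps)
    show "((\<lambda>t. - (1 + c) * (ln t + c) powr c / t) has_real_derivative
          (1 + c) * (ln t + c) powr (c - 1) * ln t / t\<^sup>2) (at t)"
      if "t \<in> {1..}" for t
    proof -
      have "(ln t + c) powr c = (ln t + c) powr (c - 1) * (ln t + c)"
        using pos[OF that] by (simp add: powr_diff)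
      then show ?thesis
        using that pos[OF that] by (auto intro!: derivative_eq_intros simp: field_simps power2_eq_square)
    qed
    show "0 \<le> (1 + c) * (ln t + c) powr (c - 1) * ln t / t\<^sup>2" if "t \<in> {1..}" for t
      using that \<open>c > 0\<close> by simp
  qed (use assms in auto)
  then show ?thesis by linarith
qed

lemma mult_ln_le_scaled_bound:
  fixes p a x y m :: real
  assumes "p > 1" and "a > 0" and "0 \<le> x" and "1 \<le> y" and "1 \<le> m"
  shows "x * ln y \<le> (ln m + 1 / (p - 1)) * (a powr (1 - p) * x powr p / p + a * (1 - 1 / p))
                      + a * (y - m) / m"
proof -
  define c where "c = 1 / (p - 1)"
  define B where "B = ln m + c"
  have "c > 0"
    using assms(1) by (simp add: c_def)
  have "B > 0"
    using \<open>c > 0\<close> assms(5) by (simp add: B_def add_nonneg_pos)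
  have conjugate: "1 / (1 + c) = 1 - 1 / p"
    using assms(1) by (simp add: c_def field_simps)
  have "(ln y / B) powr (1 + c) = ln y powr (1 + c) / B powr (1 + c)"
    using \<open>B > 0\<close> assms(4) by (simp add: powr_divide)
  also have "\<dots> \<le> (ln y + c) powr (1 + c) / B powr (1 + c)"
    using \<open>c > 0\<close> assms(4) by (intro divide_right_mono powr_mono2) auto
  also have "\<dots> \<le> (B powr (1 + c) + (1 + c) * B powr c / m * (y - m)) / B powr (1 + c)"
    using ln_add_powr_below_tangent[OF \<open>c > 0\<close> assms(5,4)]
    by (intro divide_right_mono) (simp_all add: B_def)
  also have "\<dots> = 1 + (1 + c) * (y - m) / (B * m)"
    using \<open>B > 0\<close> assms(5) by (simp add: powr_add field_simps)
  finally have tangent: "(ln y / B) powr (1 + c) \<le> 1 + (1 + c) * (y - m) / (B * m)" .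
  have "x * ln y = a * B * ((x / a) * (ln y / B))"
    using \<open>a > 0\<close> \<open>B > 0\<close> by simp
  also have "\<dots> \<le> a * B * ((x / a) powr p / p + (ln y / B) powr (1 + c) / (1 + c))"
    using Youngs_inequality[of p "1 + c" "x / a" "ln y / B"] conjugate assms \<open>c > 0\<close> \<open>B > 0\<close>
    by (intro mult_left_mono) auto
  also have "\<dots> \<le> a * B * ((x / a) powr p / p + (1 + (1 + c) * (y - m) / (B * m)) / (1 + c))"
    using tangent \<open>a > 0\<close> \<open>B > 0\<close> \<open>c > 0\<close> by (intro mult_left_mono add_left_mono divide_right_mono) auto
  also have "\<dots> = B * (a * (x / a) powr p / p + a / (1 + c)) + a * (y - m) / m"
  proof -
    have "a * B * ((1 + c) * (y - m) / (B * m) / (1 + c)) = a * (y - m) / m"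
      using \<open>B > 0\<close> \<open>c > 0\<close> assms(5) by simp
    then show ?thesis
      by (simp only: add_divide_distrib distrib_left) (simp add: algebra_simps)
  qed
  also have "a * (x / a) powr p = a powr (1 - p) * x powr p"
    using \<open>a > 0\<close> assms(3) by (simp add: powr_divide powr_diff)
  also have "a / (1 + c) = a * (1 - 1 / p)"
    using conjugate by (metis times_divide_eq_right mult_1_right)
  finally show ?thesis
    by (simp add: B_def c_def)
qed

lemma (in prob_space) integral_mult_ln_le_scaled_bound:
  fixes X Y :: "'a \<Rightarrow> real" and p a :: real
  assumes [measurable]: "X \<in> borel_measurable M" "Y \<in> borel_measurable M"
    and X_nonneg: "AE \<omega> in M. X \<omega> \<ge> 0" and Y_ge_1: "AE \<omega> in M. Y \<omega> \<ge> 1"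
    and "p > 1" and "a > 0"
    and integrable_Xp: "integrable M (\<lambda>\<omega>. X \<omega> powr p)" and integrable_Y: "integrable M Y"
  shows "integrable M (\<lambda>\<omega>. X \<omega> * ln (Y \<omega>))"
    and "(\<integral>\<omega>. X \<omega> * ln (Y \<omega>) \<partial>M)
           \<le> (ln (\<integral>\<omega>. Y \<omega> \<partial>M) + 1 / (p - 1))
              * (a powr (1 - p) * (\<integral>\<omega>. X \<omega> powr p \<partial>M) / p + a * (1 - 1 / p))"
proof -
  define m where "m = (\<integral>\<omega>. Y \<omega> \<partial>M)"
  have "m \<ge> 1"
    unfolding m_def by (rule integral_ge_const[OF integrable_Y Y_ge_1])
  define bound where "bound \<omega> = (ln m + 1 / (p - 1)) * (a powr (1 - p) * X \<omega> powr p / p + a * (1 - 1 / p))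
                                 + a * (Y \<omega> - m) / m" for \<omega>
  have integrable_bound: "integrable M bound"
    unfolding bound_def using integrable_Xp integrable_Y by simp
  have le_bound: "AE \<omega> in M. X \<omega> * ln (Y \<omega>) \<le> bound \<omega>"
    using X_nonneg Y_ge_1 unfolding bound_def
    by eventually_elim (rule mult_ln_le_scaled_bound[OF \<open>p > 1\<close> \<open>a > 0\<close> _ _ \<open>m \<ge> 1\<close>])
  have norm_le_bound: "AE \<omega> in M. norm (X \<omega> * ln (Y \<omega>)) \<le> norm (bound \<omega>)"
    using X_nonneg Y_ge_1 le_bound by eventually_elim auto
  show integrable: "integrable M (\<lambda>\<omega>. X \<omega> * ln (Y \<omega>))"
    by (rule Bochner_Integration.integrable_bound[OF integrable_bound _ norm_le_bound]) measurable
  have "(\<integral>\<omega>. X \<omega> * ln (Y \<omega>) \<partial>M) \<le> integral\<^sup>L M bound"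
    by (rule integral_mono_AE[OF integrable integrable_bound le_bound])
  also have "\<dots> = (ln m + 1 / (p - 1)) * (a powr (1 - p) * (\<integral>\<omega>. X \<omega> powr p \<partial>M) / p + a * (1 - 1 / p))"
    unfolding bound_def using integrable_Xp integrable_Y by (simp add: m_def prob_space)
  finally show "(\<integral>\<omega>. X \<omega> * ln (Y \<omega>) \<partial>M)
      \<le> (ln (\<integral>\<omega>. Y \<omega> \<partial>M) + 1 / (p - 1))
         * (a powr (1 - p) * (\<integral>\<omega>. X \<omega> powr p \<partial>M) / p + a * (1 - 1 / p))"
    by (simp add: m_def)
qed

lemma le_powr_mult_of_scaled_bounds:
  fixes e A B p :: real
  assumes "p > 1" and "A \<ge> 0" and "B > 0"
    and scaled_bound: "\<And>a. a > 0 \<Longrightarrow> e \<le> B * (a powr (1 - p) * A / p + a * (1 - 1 / p))"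
  shows "e \<le> A powr (1 / p) * B"
proof (cases "A = 0")
  case True
  have "e \<le> 0 + \<epsilon>" if "\<epsilon> > 0" for \<epsilon>
    using scaled_bound[of "\<epsilon> / (B * (1 - 1 / p))"] True that \<open>B > 0\<close> \<open>p > 1\<close> by simp
  then show ?thesis
    using True by (simp add: field_le_epsilon)
next
  case False
  define a where "a = A powr (1 / p)"
  have "a > 0" "a powr p = A"
    using False \<open>A \<ge> 0\<close> \<open>p > 1\<close> by (simp_all add: a_def powr_powr)
  then have "a powr (1 - p) * A = a"
    by (auto simp flip: powr_add)
  have "e \<le> B * (a powr (1 - p) * A / p + a * (1 - 1 / p))"
    by (rule scaled_bound[OF \<open>a > 0\<close>])
  also have "\<dots> = a * B"
    using \<open>a powr (1 - p) * A = a\<close> \<open>p > 1\<close> by (simp add: field_simps)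
  finally show ?thesis
    unfolding a_def .
qed

theorem lemma1:
  fixes M :: "'a measure" and X Y :: "'a \<Rightarrow> real" and p :: real
  assumes "prob_space M"
    and "X \<in> borel_measurable M" and "Y \<in> borel_measurable M"
    and "AE \<omega> in M. X \<omega> \<ge> 0" and "AE \<omega> in M. Y \<omega> \<ge> 1"
    and "p > 1"
    and "integrable M (\<lambda>\<omega>. X \<omega> powr p)" and "integrable M Y"
  shows "integrable M (\<lambda>\<omega>. X \<omega> * ln (Y \<omega>)) \<and>
    (\<integral>\<omega>. X \<omega> * ln (Y \<omega>) \<partial>M)
      \<le> (\<integral>\<omega>. X \<omega> powr p \<partial>M) powr (1 / p) * (ln (\<integral>\<omega>. Y \<omega> \<partial>M) + 1 / (p - 1))"
proof -
  interpret prob_space M by fact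
  define A where "A = (\<integral>\<omega>. X \<omega> powr p \<partial>M)"
  define B where "B = ln (\<integral>\<omega>. Y \<omega> \<partial>M) + 1 / (p - 1)"
  note integral_bound = integral_mult_ln_le_scaled_bound(2)[OF assms(2-6) _ assms(7,8), folded A_def B_def]
  have "A \<ge> 0"
    unfolding A_def by (rule integral_nonneg_AE) simp
  have "B > 0"
    using integral_ge_const[OF assms(8,5)] \<open>p > 1\<close> unfolding B_def by (simp add: add_nonneg_pos)
  have "(\<integral>\<omega>. X \<omega> * ln (Y \<omega>) \<partial>M) \<le> A powr (1 / p) * B"
    by (rule le_powr_mult_of_scaled_bounds[OF \<open>p > 1\<close> \<open>A \<ge> 0\<close> \<open>B > 0\<close> integral_bound])
  then show ?thesis
    using integral_mult_ln_le_scaled_bound(1)[OF assms(2-6) zero_less_one assms(7,8)]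
    by (simp add: A_def B_def mult.commute)
qed

end
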